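(* Let $p\ne5$ be an odd prime. Then $$(-1)^{[p/4]}\sum_{k=0}^{[p/4]}\binom{4k}{2k}\frac1{80^k}\equiv\begin{cases}\pm1\pmod p&\text{if }p\equiv\pm1\pmod5,\\ \pm\frac12\pmod p&\text{if }p\equiv\pm2\pmod5.\end{cases}$$
   Context: $[x]$ is the greatest integer $\le x$. *)

theory Defs
  imports Complex_Main "HOL-Computational_Algebra.Primes"
begin

text \<open>Congruence of rationals modulo an integer m: x \<equiv> y (mod m) iff the
  reduced numerator of x - y is divisible by m (equivalently x - y = a/b with
  m dividing a and b coprime to m).\<close>
definition rat_cong :: "rat \<Rightarrow> rat \<Rightarrow> int \<Rightarrow> bool" where
  "rat_cong x y m \<longleftrightarrow> m dvd fst (quotient_of (x - y))"

end

theory Submission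
  imports Defs "HOL-Computational_Algebra.Polynomial"
begin

text \<open>
  Let n = (p-1)/2, N = [p/4] and r = n - 2N.  Since binom(4k,2k) = 16^k binom(n,2k) (mod p),
  the sum is, up to a unit, U = (sum over k <= N of binom(n,2k) 5^(N-k)), and U sqrt5^r is half
  of (sqrt5 + 1)^n + (sqrt5 - 1)^n.  Work in Z[\<zeta>]/(p) with \<zeta> a primitive 20th root of unity.
  There sqrt5 = \<zeta>^4 - \<zeta>^8 - \<zeta>^12 + \<zeta>^16 is a Gauss sum, and eta_plus = 2(\<zeta>^9 - \<zeta>),
  eta_minus = 2(\<zeta>^13 - \<zeta>^17) are square roots of 2 sqrt5 (sqrt5 + 1) and 2 sqrt5 (sqrt5 - 1).
  Expanding eta_plus^p = (eta_plus^2)^n eta_plus gives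
  eta_plus^p eta_minus + eta_minus^p eta_plus = 8 2^n 5^(N+r) U sqrt5, while the Frobenius
  \<zeta> \<mapsto> \<zeta>^p evaluates the same element as an explicit multiple of sqrt5 depending only on
  p mod 20.  The residues of 5^n and 2^n needed to compare the two come from the Frobenius
  acting on sqrt5 and on 1 + \<zeta>^5 = 1 + i.
\<close>

section \<open>Congruence modulo a prime and a monic polynomial\<close>

definition poly_cong :: "nat \<Rightarrow> int poly \<Rightarrow> int poly \<Rightarrow> int poly \<Rightarrow> bool" where
  "poly_cong p f a b \<longleftrightarrow> (\<exists>u v. a - b = of_nat p * u + f * v)"

lemma poly_cong_refl [simp]: "poly_cong p f a a"
  unfolding poly_cong_def by (intro exI[of _ 0]) simp

lemma poly_cong_modulus: "\<exists>v. a - b = f * v \<Longrightarrow> poly_cong p f a b"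
  unfolding poly_cong_def by (elim exE) (rule exI[of _ 0], simp)

lemma poly_cong_prime: "a - b = of_nat p * u \<Longrightarrow> poly_cong p f a b"
  unfolding poly_cong_def by (intro exI[of _ u] exI[of _ 0]) simp

lemma poly_cong_sym: "poly_cong p f a b \<Longrightarrow> poly_cong p f b a"
  unfolding poly_cong_def
  by (metis (no_types, opaque_lifting) add_uminus_conv_diff minus_add_distrib minus_diff_eq mult_minus_right)

lemma poly_cong_add:
  assumes "poly_cong p f a b" "poly_cong p f c d"
  shows "poly_cong p f (a + c) (b + d)"
proof -
  obtain u v u' v' where "a - b = of_nat p * u + f * v" "c - d = of_nat p * u' + f * v'"
    using assms unfolding poly_cong_def by blast
  then have "(a + c) - (b + d) = of_nat p * (u + u') + f * (v + v')"
    by (simp add: algebra_simps)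
  then show ?thesis unfolding poly_cong_def by blast
qed

lemma poly_cong_trans [trans]:
  assumes "poly_cong p f a b" "poly_cong p f b c"
  shows "poly_cong p f a c"
  using poly_cong_add[OF assms] unfolding poly_cong_def by (simp add: algebra_simps)

lemma poly_cong_mult:
  assumes "poly_cong p f a b" "poly_cong p f c d"
  shows "poly_cong p f (a * c) (b * d)"
proof -
  obtain u v u' v' where h: "a - b = of_nat p * u + f * v" "c - d = of_nat p * u' + f * v'"
    using assms unfolding poly_cong_def by blast
  have "a * c - b * d = (a - b) * c + b * (c - d)"
    by (simp add: algebra_simps)
  also have "\<dots> = of_nat p * (u * c + b * u') + f * (v * c + b * v')"
    unfolding h by (simp add: algebra_simps)
  finally show ?thesis unfolding poly_cong_def by blast
qed

lemma poly_cong_power: "poly_cong p f a b \<Longrightarrow> poly_cong p f (a ^ k) (b ^ k)"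
  by (induction k) (auto intro: poly_cong_mult)

lemma poly_cong_sum:
  "(\<And>k. k \<in> A \<Longrightarrow> poly_cong p f (g k) (h k)) \<Longrightarrow> poly_cong p f (\<Sum>k\<in>A. g k) (\<Sum>k\<in>A. h k)"
  by (induction A rule: infinite_finite_induct) (auto intro: poly_cong_add)

lemma poly_cong_pcompose:
  assumes "poly_cong p f a b"
  shows "poly_cong p f (pcompose g a) (pcompose g b)"
proof (induction g)
  case (pCons c g)
  then show ?case
    by (simp add: pcompose_pCons) (intro poly_cong_add poly_cong_mult assms poly_cong_refl)
qed simp

lemma coeff_of_nat_mult: "coeff (of_nat p * u) k = int p * coeff (u :: int poly) k"
  by (simp add: of_nat_poly)

lemma monic_mult_coeffs_dvd:
  fixes f v :: "int poly"
  assumes monic: "lead_coeff f = 1"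
    and high: "\<And>j. j \<ge> degree f \<Longrightarrow> m dvd coeff (f * v) j"
  shows "m dvd coeff v k"
proof (induction "degree v - k" arbitrary: k rule: less_induct)
  case less
  have above: "m dvd coeff v j" if "j > k" for j
  proof (cases "j \<le> degree v")
    case True
    then show ?thesis using less that by simp
  qed (simp add: coeff_eq_0)
  define d where "d = degree f"
  have "coeff (f * v) (k + d) = (\<Sum>i\<le>k + d. coeff f i * coeff v (k + d - i))"
    by (rule coeff_mult)
  also have "\<dots> = coeff v k + (\<Sum>i\<in>{..k + d} - {d}. coeff f i * coeff v (k + d - i))"
    by (subst sum.remove[of _ d]) (auto simp: d_def monic)
  finally have split: "coeff v k = coeff (f * v) (k + d) - (\<Sum>i\<in>{..k + d} - {d}. coeff f i * coeff v (k + d - i))"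
    by simp
  have "m dvd coeff f i * coeff v (k + d - i)" if "i \<in> {..k + d} - {d}" for i
  proof (cases "i < d")
    case True
    then show ?thesis using above[of "k + d - i"] by simp
  next
    case False
    then have "i > degree f" using that d_def by auto
    then show ?thesis by (simp add: coeff_eq_0)
  qed
  then have "m dvd (\<Sum>i\<in>{..k + d} - {d}. coeff f i * coeff v (k + d - i))"
    by (intro dvd_sum)
  moreover have "m dvd coeff (f * v) (k + d)"
    using high d_def by simp
  ultimately show ?case
    unfolding split by (rule dvd_diff[rotated])
qed

lemma poly_cong_const_dvd:
  assumes monic: "lead_coeff f = 1" and deg: "degree f > 0"
    and cong: "poly_cong p f [:c:] [:d:]"
  shows "int p dvd c - d"
proof -
  obtain u v where uv: "[:c - d:] = of_nat p * u + f * v"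
    using cong unfolding poly_cong_def by auto
  have "int p dvd coeff (f * v) j" if "j \<ge> degree f" for j
  proof -
    have "0 = int p * coeff u j + coeff (f * v) j"
      using arg_cong[OF uv, of "\<lambda>q. coeff q j"] deg that by (simp add: coeff_of_nat_mult coeff_pCons')
    then show ?thesis by (metis add.commute add_diff_cancel_left' diff_0 dvd_minus_iff dvd_triv_left)
  qed
  then have "int p dvd coeff v 0"
    by (rule monic_mult_coeffs_dvd[OF monic])
  moreover have "c - d = int p * coeff u 0 + coeff f 0 * coeff v 0"
    using arg_cong[OF uv, of "\<lambda>q. coeff q 0"]
    by (simp only: coeff_add coeff_of_nat_mult) (simp add: coeff_mult)
  ultimately show ?thesis by simp
qed

section \<open>Frobenius modulo a prime\<close>

lemma freshmans_dream_remainder: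
  fixes a b :: "'a::comm_ring_1"
  assumes "prime p"
  shows "\<exists>u. (a + b) ^ p = a ^ p + b ^ p + of_nat p * u"
proof -
  have p: "p \<ge> 1" using assms prime_ge_1_nat by blast
  define u where "u = (\<Sum>k\<in>{1..<p}. of_nat ((p choose k) div p) * a ^ k * b ^ (p - k))"
  have "(a + b) ^ p = (\<Sum>k\<le>p. of_nat (p choose k) * a ^ k * b ^ (p - k))"
    by (rule binomial_ring)
  also have "{..p} = insert 0 (insert p {1..<p})" using p by auto
  also have "(\<Sum>k\<in>insert 0 (insert p {1..<p}). of_nat (p choose k) * a ^ k * b ^ (p - k))
      = b ^ p + (a ^ p + (\<Sum>k\<in>{1..<p}. of_nat (p choose k) * a ^ k * b ^ (p - k)))"
    using p by (subst sum.insert; auto)+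
  also have "(\<Sum>k\<in>{1..<p}. of_nat (p choose k) * a ^ k * b ^ (p - k)) = of_nat p * u"
    unfolding u_def sum_distrib_left
  proof (rule sum.cong)
    fix k assume "k \<in> {1..<p}"
    then have "p dvd p choose k" using assms by (intro dvd_choose_prime) auto
    then have "p choose k = p * ((p choose k) div p)" by simp
    then show "of_nat (p choose k) * a ^ k * b ^ (p - k)
        = of_nat p * (of_nat ((p choose k) div p) * a ^ k * b ^ (p - k))"
      by (metis (no_types, lifting) mult.assoc of_nat_mult)
  qed simp
  finally show ?thesis by (auto simp: algebra_simps)
qed

lemma fermat_int:
  assumes "prime p"
  shows "int p dvd a ^ p - a"
proof -
  have nat_case: "int p dvd int b ^ p - int b" for b
  proof (induction b)
    case 0
    then show ?case using assms prime_gt_0_nat by (simp add: power_0_left)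
  next
    case (Suc b)
    obtain u where u: "(int b + 1) ^ p = int b ^ p + 1 ^ p + of_nat p * u"
      using freshmans_dream_remainder[OF assms] by blast
    have "int (Suc b) ^ p - int (Suc b) = (int b ^ p - int b) + int p * u"
      using u by (simp add: add.commute)
    then show ?case using Suc by (metis dvd_add dvd_triv_left)
  qed
  define b where "b = nat (a mod int p)"
  have b: "int b = a mod int p"
    unfolding b_def using assms prime_gt_0_nat by simp
  have "a ^ p mod int p = int b ^ p mod int p"
    unfolding b by (simp add: power_mod)
  also have "\<dots> = int b mod int p"
    using nat_case[of b] by (simp add: mod_eq_dvd_iff)
  also have "\<dots> = a mod int p"
    unfolding b by simp
  finally show ?thesis by (simp add: mod_eq_dvd_iff)
qed

lemma poly_cong_const:
  assumes "int p dvd c - d"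
  shows "poly_cong p f [:c:] [:d:]"
proof -
  obtain k where "c - d = int p * k" using assms by blast
  then have "[:c:] - [:d:] = of_nat p * [:k:]" by (simp add: of_nat_poly)
  then show ?thesis by (rule poly_cong_prime)
qed

lemma poly_frobenius:
  assumes "prime p"
  shows "poly_cong p f (g ^ p) (pcompose g ([:0, 1:] ^ p))"
proof (induction g)
  case 0
  then show ?case using assms prime_gt_0_nat by (simp add: power_0_left)
next
  case (pCons a h)
  have split: "pCons a h = [:a:] + [:0, 1:] * h" by simp
  obtain u where u: "([:a:] + [:0, 1:] * h) ^ p = [:a:] ^ p + ([:0, 1:] * h) ^ p + of_nat p * u"
    using freshmans_dream_remainder[OF assms] by blast
  have "poly_cong p f ((pCons a h) ^ p) ([:a:] ^ p + ([:0, 1:] * h) ^ p)"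
    unfolding split u by (rule poly_cong_prime[of _ _ _ u]) simp
  also have "poly_cong p f \<dots> ([:a:] + [:0, 1:] ^ p * pcompose h ([:0, 1:] ^ p))"
  proof (intro poly_cong_add)
    show "poly_cong p f ([:a:] ^ p) [:a:]"
      using poly_cong_const[OF fermat_int[OF assms, of a]] by (simp add: poly_const_pow)
    show "poly_cong p f (([:0, 1:] * h) ^ p) ([:0, 1:] ^ p * pcompose h ([:0, 1:] ^ p))"
      unfolding power_mult_distrib by (rule poly_cong_mult[OF poly_cong_refl pCons.IH])
  qed
  finally show ?case by (simp add: pcompose_pCons)
qed

lemma int_prime_not_dvd_prime:
  fixes p q :: nat
  assumes "prime p" "prime q" "p \<noteq> q"
  shows "\<not> int p dvd int q"
  using assms primes_dvd_imp_eq by auto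

lemma prime_five: "prime (5 :: nat)"
  by code_simp

lemma int_prime_not_dvd_2_5_powers:
  assumes "prime p" "odd p" "p \<noteq> 5"
  shows "\<not> int p dvd 2 ^ a * 5 ^ b"
proof -
  have "p \<noteq> 2" using assms(2) by auto
  then have "prime (int p)" "\<not> int p dvd 2" "\<not> int p dvd 5"
    using assms(1) int_prime_not_dvd_prime[OF assms(1) two_is_prime_nat]
      int_prime_not_dvd_prime[OF assms(1) prime_five assms(3)] by auto
  then show ?thesis
    by (metis prime_dvd_multD prime_dvd_power)
qed

lemma prime_mod_20:
  fixes p :: nat
  assumes "prime p" "odd p" "p \<noteq> 5"
  shows "p mod 20 \<in> {1, 3, 7, 9, 11, 13, 17, 19}"
proof -
  have "\<not> 5 dvd p"
    using primes_dvd_imp_eq[OF prime_five assms(1)] assms(3) by auto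
  then have "odd (p mod 20)" "p mod 20 mod 5 \<noteq> 0" "p mod 20 \<in> set [0..<20]"
    using assms(2) by (simp_all add: mod_mod_cancel odd_iff_mod_2_eq_one dvd_eq_mod_eq_0)
  then show ?thesis
    by (simp add: upt_rec) (elim disjE; simp)
qed

section \<open>The ring Z[x]/(p, cyclotomic20)\<close>

text \<open>The class of \<zeta> in Z[x]/(p, cyclotomic20) is a primitive 20th root of unity.\<close>

definition \<zeta> :: "int poly" where "\<zeta> = [:0, 1:]"

definition cyclotomic20 :: "int poly" where
  "cyclotomic20 = \<zeta> ^ 8 - \<zeta> ^ 6 + \<zeta> ^ 4 - \<zeta> ^ 2 + 1"

abbreviation cong20 :: "nat \<Rightarrow> int poly \<Rightarrow> int poly \<Rightarrow> bool" where
  "cong20 p \<equiv> poly_cong p cyclotomic20"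

lemma cyclotomic20_coeffs: "cyclotomic20 = [:1, 0, -1, 0, 1, 0, -1, 0, 1:]"
proof -
  have "\<zeta> ^ k = monom 1 k" for k
    unfolding \<zeta>_def by (simp add: monom_altdef)
  then show ?thesis
    unfolding cyclotomic20_def by (simp add: poly_eq_iff coeff_monom coeff_pCons split: nat.split)
qed

lemma cong20_dvd:
  assumes "cong20 p (of_int c) (of_int d)"
  shows "int p dvd c - d"
  by (rule poly_cong_const_dvd[where f = cyclotomic20])
     (use assms in \<open>simp_all add: cyclotomic20_coeffs of_int_poly\<close>)

lemma cong20_zeta_pow_mod: "cong20 p (\<zeta> ^ k) (\<zeta> ^ (k mod 20))"
proof -
  have "cong20 p (\<zeta> ^ 20) 1"
    by (intro poly_cong_modulus) (unfold cyclotomic20_def, algebra)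
  then have "cong20 p ((\<zeta> ^ 20) ^ (k div 20) * \<zeta> ^ (k mod 20)) (1 ^ (k div 20) * \<zeta> ^ (k mod 20))"
    by (intro poly_cong_mult poly_cong_power poly_cong_refl)
  then show ?thesis
    by (simp flip: power_mult power_add)
qed

lemma cong20_zeta_pow_10: "cong20 p (\<zeta> ^ 10) (-1)"
  by (intro poly_cong_modulus) (unfold cyclotomic20_def, algebra)

lemma cong20_frobenius:
  assumes "prime p"
  shows "cong20 p (g ^ p) (pcompose g (\<zeta> ^ (p mod 20)))"
  using poly_frobenius[OF assms] poly_cong_pcompose[OF cong20_zeta_pow_mod]
  unfolding \<zeta>_def by (rule poly_cong_trans)

lemma pcompose_zeta: "pcompose \<zeta> q = q"
  by (simp add: \<zeta>_def pcompose_pCons)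

lemma pcompose_zeta_pow: "pcompose (\<zeta> ^ k) q = q ^ k"
  by (induction k) (simp_all add: pcompose_mult pcompose_zeta pcompose_1)

lemma pcompose_numeral: "pcompose (numeral m) q = numeral m"
  by (metis of_nat_numeral of_nat_poly pcompose_const)

definition sqrt5 :: "int poly" where "sqrt5 = \<zeta> ^ 4 - \<zeta> ^ 8 - \<zeta> ^ 12 + \<zeta> ^ 16"

definition eta_plus :: "int poly" where "eta_plus = 2 * \<zeta> ^ 9 - 2 * \<zeta>"

definition eta_minus :: "int poly" where "eta_minus = 2 * \<zeta> ^ 13 - 2 * \<zeta> ^ 17"

lemma sqrt5_square: "cong20 p (sqrt5 ^ 2) 5"
  by (intro poly_cong_modulus) (unfold sqrt5_def cyclotomic20_def, algebra)

lemma eta_plus_square: "cong20 p (eta_plus ^ 2) (2 * sqrt5 * (sqrt5 + 1))"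
  by (intro poly_cong_modulus) (unfold eta_plus_def sqrt5_def cyclotomic20_def, algebra)

lemma eta_minus_square: "cong20 p (eta_minus ^ 2) (2 * sqrt5 * (sqrt5 - 1))"
  by (intro poly_cong_modulus) (unfold eta_minus_def sqrt5_def cyclotomic20_def, algebra)

lemma eta_plus_eta_minus: "cong20 p (eta_plus * eta_minus) (4 * sqrt5)"
  by (intro poly_cong_modulus) (unfold eta_plus_def eta_minus_def sqrt5_def cyclotomic20_def, algebra)

lemma cong20_cancel_sqrt5:
  assumes "prime p" "p \<noteq> 5" "cong20 p (of_int a * sqrt5) (of_int b * sqrt5)"
  shows "int p dvd a - b"
proof -
  have "cong20 p (of_int a * sqrt5 ^ 2) (of_int b * sqrt5 ^ 2)"
    using poly_cong_mult[OF assms(3) poly_cong_refl[of p _ sqrt5]] by (simp add: power2_eq_square mult.assoc)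
  then have "cong20 p (of_int a * 5) (of_int b * 5)"
    using poly_cong_mult[OF poly_cong_refl sqrt5_square] by (meson poly_cong_sym poly_cong_trans)
  then have "int p dvd 5 * a - 5 * b"
    using cong20_dvd[of p "5 * a" "5 * b"] by (simp add: mult.commute)
  then have "int p dvd 5 * (a - b)"
    by (simp add: right_diff_distrib)
  moreover have "\<not> int p dvd 5"
    using int_prime_not_dvd_prime[OF assms(1) prime_five assms(2)] by simp
  moreover have "prime (int p)"
    using assms(1) by simp
  ultimately show ?thesis
    using prime_dvd_multD by blast
qed

text \<open>By quadratic reciprocity chi5 p is the Legendre symbol (5/p); five_power_half below is
  Euler's criterion for it.\<close>

definition chi5 :: "nat \<Rightarrow> int" where
  "chi5 s = (if s mod 5 \<in> {1, 4} then 1 else -1)"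

definition twice_residue :: "nat \<Rightarrow> int" where
  "twice_residue s = (if s mod 5 = 1 then 2 else if s mod 5 = 4 then -2 else if s mod 5 = 2 then 1 else -1)"

lemma sqrt5_frobenius_table:
  assumes "s \<in> {1, 3, 7, 9, 11, 13, 17, 19}"
  shows "cong20 p (pcompose sqrt5 (\<zeta> ^ s)) (of_int (chi5 s) * sqrt5)"
  unfolding cyclotomic20_def sqrt5_def
  by (insert assms, (elim insertE emptyE; hypsubst_thin; simp add: chi5_def pcompose_diff pcompose_add
      pcompose_zeta_pow flip: power_mult; rule poly_cong_modulus; algebra))

lemma eta_frobenius_table:
  assumes "s \<in> {1, 3, 7, 9, 11, 13, 17, 19}"
  shows "cong20 p (pcompose eta_plus (\<zeta> ^ s) * eta_minus + pcompose eta_minus (\<zeta> ^ s) * eta_plus)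
           (of_int (4 * (-1) ^ (s div 2) * twice_residue s * chi5 s) * sqrt5)"
  unfolding cyclotomic20_def sqrt5_def eta_plus_def eta_minus_def
  by (insert assms, (elim insertE emptyE; hypsubst_thin; simp add: chi5_def twice_residue_def pcompose_diff
      pcompose_mult pcompose_zeta pcompose_zeta_pow pcompose_numeral flip: power_mult;
      rule poly_cong_modulus; algebra))

lemma sqrt5_frobenius:
  assumes "prime p" "odd p" "p \<noteq> 5"
  shows "cong20 p (sqrt5 ^ p) (of_int (chi5 p) * sqrt5)"
proof -
  have "chi5 (p mod 20) = chi5 p"
    unfolding chi5_def by (simp add: mod_mod_cancel)
  then show ?thesis
    using poly_cong_trans[OF cong20_frobenius[OF assms(1)] sqrt5_frobenius_table[OF prime_mod_20[OF assms]]]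
    by simp
qed

lemma eta_frobenius:
  assumes "prime p" "odd p" "p \<noteq> 5"
  shows "cong20 p (eta_plus ^ p * eta_minus + eta_minus ^ p * eta_plus)
           (of_int (4 * (-1) ^ ((p - 1) div 2) * twice_residue p * chi5 p) * sqrt5)"
proof -
  have "chi5 (p mod 20) = chi5 p" "twice_residue (p mod 20) = twice_residue p"
    unfolding chi5_def twice_residue_def by (simp_all add: mod_mod_cancel)
  moreover have "(-1 :: int) ^ (p mod 20 div 2) = (-1) ^ ((p - 1) div 2)"
  proof -
    obtain c where c: "p mod 20 = 2 * c + 1"
      using assms(2) by (metis odd_iff_mod_2_eq_one mod_mod_cancel even_numeral oddE)
    have "p = 20 * (p div 20) + p mod 20" by simp
    then have "(p - 1) div 2 = 2 * (5 * (p div 20)) + c"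
      unfolding c by linarith
    then show ?thesis by (simp add: c power_add power_mult)
  qed
  moreover have "cong20 p (eta_plus ^ p * eta_minus + eta_minus ^ p * eta_plus)
      (pcompose eta_plus (\<zeta> ^ (p mod 20)) * eta_minus + pcompose eta_minus (\<zeta> ^ (p mod 20)) * eta_plus)"
    by (intro poly_cong_add poly_cong_mult cong20_frobenius assms(1) poly_cong_refl)
  ultimately show ?thesis
    using poly_cong_trans[OF _ eta_frobenius_table[OF prime_mod_20[OF assms]]] by simp
qed

lemma five_power_half:
  assumes "prime p" "p = 2 * n + 1" "p \<noteq> 5"
  shows "int p dvd 5 ^ n - chi5 p"
proof -
  have "cong20 p (5 ^ n) ((sqrt5 ^ 2) ^ n)"
    by (intro poly_cong_power poly_cong_sym[OF sqrt5_square])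
  then have "cong20 p (of_int (5 ^ n) * sqrt5) ((sqrt5 ^ 2) ^ n * sqrt5)"
    by (simp add: poly_cong_mult)
  also have "(sqrt5 ^ 2) ^ n * sqrt5 = sqrt5 ^ p"
    by (simp add: assms(2) power_mult power_add)
  also have "cong20 p \<dots> (of_int (chi5 p) * sqrt5)"
    by (rule sqrt5_frobenius) (use assms in auto)
  finally show ?thesis
    by (rule cong20_cancel_sqrt5[OF assms(1,3)])
qed

lemma cong20_two_power_half:
  assumes "prime p" "p = 2 * n + 1" "n = 2 * N + r" "r \<le> 1"
  shows "cong20 p (of_int (2 * (2 ^ n * (-1) ^ N))) (of_int (2 * (-1) ^ r))"
proof -
  define A :: int where "A = 2 ^ n * (-1) ^ N"
  \<comment> \<open>multiplying by m removes the units \<zeta>^(5r) and 1 + \<zeta>^5, as \<zeta>^(20r) = 1 and (1 + i)(1 - i) = 2\<close>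
  define m where "m = \<zeta> ^ (15 * r) * (1 - \<zeta> ^ 5)"
  have r: "r = 0 \<or> r = 1" using assms(4) by auto
  have "(1 + \<zeta> ^ 5) ^ p = ((1 + \<zeta> ^ 5) ^ 2) ^ n * (1 + \<zeta> ^ 5)"
    by (simp add: assms(2) power_add power_mult)
  also have "cong20 p \<dots> ((2 * \<zeta> ^ 5) ^ n * (1 + \<zeta> ^ 5))"
    by (intro poly_cong_mult poly_cong_power poly_cong_refl poly_cong_modulus)
       (unfold cyclotomic20_def, algebra)
  also have "(2 * \<zeta> ^ 5) ^ n * (1 + \<zeta> ^ 5) = 2 ^ n * (\<zeta> ^ 10) ^ N * \<zeta> ^ (5 * r) * (1 + \<zeta> ^ 5)"
    by (simp add: assms(3) power_mult_distrib power_add flip: power_mult)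
  also have "cong20 p \<dots> (2 ^ n * (-1) ^ N * \<zeta> ^ (5 * r) * (1 + \<zeta> ^ 5))"
    by (intro poly_cong_mult poly_cong_power poly_cong_refl cong20_zeta_pow_10)
  finally have "cong20 p ((1 + \<zeta> ^ 5) ^ p) (of_int A * \<zeta> ^ (5 * r) * (1 + \<zeta> ^ 5))"
    by (simp add: A_def)
  moreover have "cong20 p ((1 + \<zeta> ^ 5) ^ p) (1 + \<zeta> ^ (10 * r + 5))"
  proof -
    have "cong20 p ((1 + \<zeta> ^ 5) ^ p) (1 + \<zeta> ^ (5 * p))"
      using poly_frobenius[OF assms(1), of cyclotomic20 "1 + \<zeta> ^ 5"]
      by (simp add: \<zeta>_def pcompose_add pcompose_1 pcompose_zeta_pow[unfolded \<zeta>_def] mult.commute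
          flip: power_mult)
    also have "cong20 p (1 + \<zeta> ^ (5 * p)) (1 + \<zeta> ^ (5 * p mod 20))"
      by (intro poly_cong_add poly_cong_refl cong20_zeta_pow_mod)
    also have "5 * p mod 20 = 10 * r + 5"
    proof -
      have "5 * p = 10 * r + 5 + 20 * N"
        using assms(2,3) by simp
      then show ?thesis
        using assms(4) by simp
    qed
    finally show ?thesis .
  qed
  ultimately have "cong20 p (of_int A * \<zeta> ^ (5 * r) * (1 + \<zeta> ^ 5) * m) ((1 + \<zeta> ^ (10 * r + 5)) * m)"
    by (meson poly_cong_mult poly_cong_refl poly_cong_sym poly_cong_trans)
  moreover have "cong20 p (of_int A * \<zeta> ^ (5 * r) * (1 + \<zeta> ^ 5) * m) (of_int (2 * A))"
    unfolding m_def cyclotomic20_def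
    by (insert r, (elim disjE; hypsubst_thin; simp; rule poly_cong_modulus; algebra))
  moreover have "cong20 p ((1 + \<zeta> ^ (10 * r + 5)) * m) (of_int (2 * (-1) ^ r))"
    unfolding m_def cyclotomic20_def
    by (insert r, (elim disjE; hypsubst_thin; simp; rule poly_cong_modulus; algebra))
  ultimately show ?thesis
    unfolding A_def by (meson poly_cong_sym poly_cong_trans)
qed

lemma two_power_half:
  assumes "prime p" "p = 2 * n + 1" "n = 2 * N + r" "r \<le> 1"
  shows "int p dvd 2 ^ n * (-1) ^ (N + r) - 1"
proof -
  have "int p dvd 2 * (2 ^ n * (-1) ^ N) - 2 * (-1) ^ r"
    using cong20_dvd[OF cong20_two_power_half[OF assms]] .
  moreover have "(-1 :: int) ^ r * (-1) ^ r = 1"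
    by (simp flip: power_add)
  then have "(-1) ^ r * (2 * (2 ^ n * (-1) ^ N) - 2 * (-1) ^ r) = 2 * (2 ^ n * (-1) ^ (N + r) - 1 :: int)"
    by (simp add: algebra_simps power_add)
  ultimately have "int p dvd 2 * (2 ^ n * (-1) ^ (N + r) - 1)"
    by (metis dvd_mult)
  moreover have "\<not> int p dvd 2"
    using int_prime_not_dvd_prime[OF assms(1) two_is_prime_nat] assms(2) by auto
  moreover have "prime (int p)"
    using assms(1) by simp
  ultimately show ?thesis
    using prime_dvd_multD by blast
qed

section \<open>Binomial sums\<close>

lemma sum_even_indices:
  fixes g :: "nat \<Rightarrow> 'a::comm_monoid_add"
  shows "(\<Sum>k\<le>n. if even k then g k else 0) = (\<Sum>j\<le>n div 2. g (2 * j))"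
proof -
  have "(\<Sum>k\<le>n. if even k then g k else 0) = sum g {k \<in> {..n}. even k}"
    by (rule sum.inter_filter[symmetric]) simp
  also have "{k \<in> {..n}. even k} = (*) 2 ` {..n div 2}"
    by (auto elim!: evenE)
  also have "sum g \<dots> = (\<Sum>j\<le>n div 2. g (2 * j))"
    by (subst sum.reindex) (auto simp: inj_on_def)
  finally show ?thesis .
qed

lemma binomial_even_terms:
  fixes e :: "'a::comm_ring_1"
  shows "(e + 1) ^ n + (e - 1) ^ n = 2 * (\<Sum>k\<le>n div 2. of_nat (n choose (2 * k)) * e ^ (n - 2 * k))"
proof -
  have plus: "(e + 1) ^ n = (\<Sum>k\<le>n. of_nat (n choose k) * 1 ^ k * e ^ (n - k))"
    using binomial_ring[of 1 e n] by (simp add: add.commute)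
  have minus: "(e - 1) ^ n = (\<Sum>k\<le>n. of_nat (n choose k) * (-1) ^ k * e ^ (n - k))"
    using binomial_ring[of "-1" e n] by (simp add: add.commute)
  have "(e + 1) ^ n + (e - 1) ^ n = (\<Sum>k\<le>n. if even k then 2 * (of_nat (n choose k) * e ^ (n - k)) else 0)"
    unfolding plus minus sum.distrib[symmetric] by (intro sum.cong) auto
  also have "\<dots> = (\<Sum>j\<le>n div 2. 2 * (of_nat (n choose (2 * j)) * e ^ (n - 2 * j)))"
    by (rule sum_even_indices)
  finally show ?thesis by (simp add: sum_distrib_left)
qed

lemma Suc_times_binomial_diff: "Suc k * (n choose Suc k) = (n - k) * (n choose k)"
proof (cases n)
  case (Suc m)
  then show ?thesis
    using Suc_times_binomial[of k m] binomial_absorb_comp[of n k] by simp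
qed simp

lemma Suc_times_central_binomial: "Suc m * (2 * Suc m choose Suc m) = 2 * (2 * m + 1) * (2 * m choose m)"
proof -
  have "Suc m * (Suc m * (2 * Suc m choose Suc m)) = Suc (Suc (2 * m)) * (Suc m * (Suc (2 * m) choose Suc m))"
    using Suc_times_binomial[of m "Suc (2 * m)"] binomial_symmetric[of m "Suc (2 * m)"]
    by (simp del: binomial_Suc_Suc)
  also have "\<dots> = Suc m * (2 * (2 * m + 1) * (2 * m choose m))"
    unfolding Suc_times_binomial by (simp del: binomial_Suc_Suc add: algebra_simps)
  finally show ?thesis
    by (subst (asm) mult_left_cancel) (simp_all del: binomial_Suc_Suc)
qed

lemma central_binomial_cong:
  assumes "prime p" "p = 2 * n + 1" "m \<le> n"
  shows "int p dvd int (2 * m choose m) - (-4) ^ m * int (n choose m)"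
  using assms(3)
proof (induction m)
  case (Suc m)
  define A where "A = int (2 * m choose m)"
  define B where "B = int (n choose m)"
  have central: "int (Suc m) * int (2 * Suc m choose Suc m) = 2 * (2 * int m + 1) * A"
    using arg_cong[OF Suc_times_central_binomial[of m], of int] unfolding A_def
    by (simp add: algebra_simps del: binomial_Suc_Suc)
  have lower: "int (Suc m) * int (n choose Suc m) = (int n - int m) * B"
    using arg_cong[OF Suc_times_binomial_diff[of m n], of int] Suc.prems unfolding B_def
    by (simp add: of_nat_diff algebra_simps del: binomial_Suc_Suc)
  have "int (Suc m) * (int (2 * Suc m choose Suc m) - (-4) ^ Suc m * int (n choose Suc m))
      = 2 * (2 * int m + 1) * (A - (-4) ^ m * B) + 2 * (-4) ^ m * B * int p"
    unfolding right_diff_distrib central mult.left_commute[of "int (Suc m)" "(-4) ^ Suc m"] lower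
    by (simp add: algebra_simps assms(2))
  moreover have "int p dvd A - (-4) ^ m * B"
    using Suc unfolding A_def B_def by simp
  ultimately have "int p dvd int (Suc m) * (int (2 * Suc m choose Suc m) - (-4) ^ Suc m * int (n choose Suc m))"
    by (metis dvd_add dvd_mult dvd_triv_left mult.commute)
  moreover have "\<not> int p dvd int (Suc m)"
  proof
    assume "int p dvd int (Suc m)"
    then have "p dvd Suc m" by (simp only: of_nat_dvd_iff)
    then have "p \<le> Suc m" by (rule dvd_imp_le) simp
    then show False using Suc.prems assms(2) by simp
  qed
  ultimately show ?case
    using assms(1) by (simp add: prime_dvd_mult_iff)
qed simp

lemma central_binomial_sum_reduction:
  assumes "prime p" "p = 2 * n + 1" "2 * N \<le> n"
  shows "int p dvd (\<Sum>k\<le>N. int (4 * k choose (2 * k)) * 80 ^ (N - k))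
                   - 16 ^ N * (\<Sum>k\<le>N. int (n choose (2 * k)) * 5 ^ (N - k))"
proof -
  have "(\<Sum>k\<le>N. int (4 * k choose (2 * k)) * 80 ^ (N - k)) - 16 ^ N * (\<Sum>k\<le>N. int (n choose (2 * k)) * 5 ^ (N - k))
      = (\<Sum>k\<le>N. 80 ^ (N - k) * (int (2 * (2 * k) choose (2 * k)) - (-4) ^ (2 * k) * int (n choose (2 * k))))"
    unfolding sum_distrib_left sum_subtractf[symmetric]
  proof (rule sum.cong)
    fix k assume "k \<in> {..N}"
    then have "(16 :: int) ^ N = 16 ^ k * 16 ^ (N - k)"
      by (simp flip: power_add)
    moreover have "(-4 :: int) ^ (2 * k) = 16 ^ k" "(80 :: int) ^ (N - k) = 16 ^ (N - k) * 5 ^ (N - k)"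
      by (simp_all add: power_mult flip: power_mult_distrib)
    ultimately show "int (4 * k choose (2 * k)) * 80 ^ (N - k) - 16 ^ N * (int (n choose (2 * k)) * 5 ^ (N - k))
        = 80 ^ (N - k) * (int (2 * (2 * k) choose (2 * k)) - (-4) ^ (2 * k) * int (n choose (2 * k)))"
      by (simp add: algebra_simps)
  qed simp
  also have "int p dvd \<dots>"
    by (intro dvd_sum dvd_mult central_binomial_cong[OF assms(1,2)]) (use assms(3) in auto)
  finally show ?thesis .
qed

lemma sum_div_power_eq:
  fixes a :: "nat \<Rightarrow> nat" and b :: int
  assumes "b \<noteq> 0"
  shows "(\<Sum>k = 0..N. of_nat (a k) / (of_int b :: 'a :: field_char_0) ^ k)
       = of_int (\<Sum>k\<le>N. int (a k) * b ^ (N - k)) / of_int b ^ N"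
proof -
  have "of_int (\<Sum>k\<le>N. int (a k) * b ^ (N - k)) / (of_int b :: 'a) ^ N
      = (\<Sum>k\<le>N. of_nat (a k) * of_int b ^ (N - k) / of_int b ^ N)"
    by (simp add: sum_divide_distrib)
  also have "\<dots> = (\<Sum>k\<le>N. of_nat (a k) / (of_int b :: 'a) ^ k)"
    using assms by (intro sum.cong) (simp_all add: power_diff)
  finally show ?thesis by (simp add: atLeast0AtMost)
qed

section \<open>The sum modulo p\<close>

lemma eta_twisted_sum:
  assumes "n = 2 * N + r" "r \<le> 1"
  shows "cong20 q (eta_plus ^ (2 * n + 1) * eta_minus + eta_minus ^ (2 * n + 1) * eta_plus)
           (of_int (8 * 2 ^ n * 5 ^ (N + r) * (\<Sum>k\<le>N. int (n choose (2 * k)) * 5 ^ (N - k))) * sqrt5)"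
proof -
  define U where "U = (\<Sum>k\<le>N. int (n choose (2 * k)) * 5 ^ (N - k))"
  have "n div 2 = N" using assms by auto
  have "eta_plus ^ (2 * n + 1) * eta_minus + eta_minus ^ (2 * n + 1) * eta_plus
      = (eta_plus ^ 2) ^ n * (eta_plus * eta_minus) + (eta_minus ^ 2) ^ n * (eta_plus * eta_minus)"
    by (simp only: power_add power_mult power_one_right) (simp add: ac_simps)
  also have "cong20 q \<dots> ((2 * sqrt5 * (sqrt5 + 1)) ^ n * (4 * sqrt5) + (2 * sqrt5 * (sqrt5 - 1)) ^ n * (4 * sqrt5))"
    by (intro poly_cong_add poly_cong_mult poly_cong_power eta_plus_square eta_minus_square eta_plus_eta_minus)
  also have "\<dots> = 4 * 2 ^ n * sqrt5 ^ n * sqrt5 * ((sqrt5 + 1) ^ n + (sqrt5 - 1) ^ n)"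
    by (simp only: power_mult_distrib) (simp add: algebra_simps)
  also have "\<dots> = 8 * 2 ^ n * sqrt5 ^ n * sqrt5 * (\<Sum>k\<le>N. of_nat (n choose (2 * k)) * sqrt5 ^ (n - 2 * k))"
    unfolding binomial_even_terms \<open>n div 2 = N\<close> by simp
  also have "cong20 q \<dots> (8 * 2 ^ n * sqrt5 ^ n * sqrt5 * (\<Sum>k\<le>N. of_nat (n choose (2 * k)) * (5 ^ (N - k) * sqrt5 ^ r)))"
  proof (intro poly_cong_mult poly_cong_refl poly_cong_sum)
    fix k assume "k \<in> {..N}"
    then have "sqrt5 ^ (n - 2 * k) = (sqrt5 ^ 2) ^ (N - k) * sqrt5 ^ r"
      using assms(1) by (simp add: algebra_simps flip: power_mult power_add)
    then show "cong20 q (sqrt5 ^ (n - 2 * k)) (5 ^ (N - k) * sqrt5 ^ r)"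
      by (simp add: poly_cong_mult poly_cong_power sqrt5_square)
  qed
  also have "\<dots> = 8 * 2 ^ n * of_int U * (sqrt5 ^ 2) ^ (N + r) * sqrt5"
  proof -
    have "(\<Sum>k\<le>N. of_nat (n choose (2 * k)) * (5 ^ (N - k) * sqrt5 ^ r)) = of_int U * sqrt5 ^ r"
      unfolding U_def by (simp add: sum_distrib_left sum_distrib_right algebra_simps)
    moreover have "sqrt5 ^ n * sqrt5 ^ r = (sqrt5 ^ 2) ^ (N + r)"
      using assms(1) by (simp add: algebra_simps flip: power_mult power_add)
    ultimately show ?thesis by (simp add: algebra_simps)
  qed
  also have "cong20 q \<dots> (8 * 2 ^ n * of_int U * 5 ^ (N + r) * sqrt5)"
    by (intro poly_cong_mult poly_cong_power sqrt5_square poly_cong_refl)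
  also have "\<dots> = of_int (8 * 2 ^ n * 5 ^ (N + r) * U) * sqrt5"
    by (simp add: algebra_simps)
  finally show ?thesis unfolding U_def .
qed

lemma twisted_sum_congruence:
  assumes "prime p" "p \<noteq> 5" "p = 2 * n + 1" "n = 2 * N + r" "r \<le> 1"
  shows "int p dvd 8 * 2 ^ n * 5 ^ (N + r) * (\<Sum>k\<le>N. int (n choose (2 * k)) * 5 ^ (N - k))
                   - 4 * (-1) ^ n * twice_residue p * chi5 p"
proof -
  have "(p - 1) div 2 = n" "odd p" using assms(3) by simp_all
  then have "cong20 p (eta_plus ^ (2 * n + 1) * eta_minus + eta_minus ^ (2 * n + 1) * eta_plus)
      (of_int (4 * (-1) ^ n * twice_residue p * chi5 p) * sqrt5)"
    using eta_frobenius[OF assms(1) _ assms(2)] unfolding assms(3) by simp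
  then show ?thesis
    using cong20_cancel_sqrt5[OF assms(1,2)] eta_twisted_sum[OF assms(4,5)]
    by (meson poly_cong_sym poly_cong_trans)
qed

lemma even_binomial_sum_congruence:
  assumes "prime p" "p \<noteq> 5" "p = 2 * n + 1" "n = 2 * N + r" "r \<le> 1"
  shows "int p dvd 2 * (-1) ^ N * (\<Sum>k\<le>N. int (n choose (2 * k)) * 5 ^ (N - k)) - twice_residue p * 5 ^ N"
proof -
  define U where "U = (\<Sum>k\<le>N. int (n choose (2 * k)) * 5 ^ (N - k))"
  define c where "c = twice_residue p"
  define \<chi> where "\<chi> = chi5 p"
  define a :: int where "a = 2 ^ n"
  define g :: int where "g = 5 ^ (N + r)"
  define h :: int where "h = 5 ^ N"
  define e :: int where "e = (-1) ^ (N + r)"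
  define f :: int where "f = (-1) ^ r"
  have signs: "e * e = 1" "f * f = 1" "(-1) ^ N = e * f" "(-1) ^ n = f"
    unfolding e_def f_def using assms(4)
    by (simp_all flip: power_add) (simp_all add: power_add power_mult)
  have "odd p"
    using assms(3) by simp
  have "int p dvd 8 * a * g * U - 4 * f * c * \<chi>"
    using twisted_sum_congruence[OF assms] signs(4) unfolding U_def a_def g_def c_def \<chi>_def by simp
  moreover have "int p dvd g * h - \<chi>"
  proof -
    have "g * h = 5 ^ n"
      unfolding g_def h_def assms(4) by (simp add: mult_2 ac_simps flip: power_add)
    then show ?thesis
      using five_power_half[OF assms(1,3,2)] unfolding \<chi>_def by simp
  qed
  moreover have "int p dvd a * e - 1"
    unfolding a_def e_def using two_power_half[OF assms(1,3,4,5)] .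
  moreover have "2 ^ 2 * g * (2 * (e * f) * U - c * h)
      = f * ((8 * a * g * U - 4 * f * c * \<chi>) - 8 * g * U * e * (a * e - 1) - 4 * f * c * (g * h - \<chi>))"
    using signs(1,2) by algebra
  ultimately have "int p dvd 2 ^ 2 * 5 ^ (N + r) * (2 * (-1) ^ N * U - c * h)"
    unfolding signs(3) g_def by (metis dvd_diff dvd_mult)
  moreover have "\<not> int p dvd 2 ^ 2 * 5 ^ (N + r)"
    using int_prime_not_dvd_2_5_powers[OF assms(1) \<open>odd p\<close> assms(2)] .
  moreover have "prime (int p)"
    using assms(1) by simp
  ultimately show ?thesis
    unfolding U_def c_def h_def using prime_dvd_multD by blast
qed

lemma central_binomial_sum_congruence:
  assumes "prime p" "odd p" "p \<noteq> 5"
  defines "N \<equiv> p div 4"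
  shows "int p dvd 2 * (-1) ^ N * (\<Sum>k\<le>N. int (4 * k choose (2 * k)) * 80 ^ (N - k))
                   - twice_residue p * 80 ^ N"
proof -
  define n where "n = (p - 1) div 2"
  define r where "r = n - 2 * N"
  define U where "U = (\<Sum>k\<le>N. int (n choose (2 * k)) * 5 ^ (N - k))"
  define T where "T = (\<Sum>k\<le>N. int (4 * k choose (2 * k)) * 80 ^ (N - k))"
  define c where "c = twice_residue p"
  have shape: "p = 2 * n + 1" "n = 2 * N + r" "r \<le> 1"
    using assms(2) unfolding n_def N_def r_def by (auto elim!: oddE)
  have "int p dvd 2 * (-1) ^ N * U - c * 5 ^ N"
    unfolding U_def c_def by (rule even_binomial_sum_congruence[OF assms(1,3) shape])
  moreover have "int p dvd T - 16 ^ N * U"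
    unfolding T_def U_def by (rule central_binomial_sum_reduction[OF assms(1) shape(1)]) (use shape in simp)
  moreover have "2 * (-1) ^ N * T - c * 80 ^ N
      = 2 * (-1) ^ N * (T - 16 ^ N * U) + 16 ^ N * (2 * (-1) ^ N * U - c * 5 ^ N)"
    by (simp add: algebra_simps flip: power_mult_distrib)
  ultimately have "int p dvd 2 * (-1) ^ N * T - c * 80 ^ N"
    by (metis dvd_add dvd_mult)
  then show ?thesis
    unfolding T_def c_def .
qed

lemma rat_cong_fraction:
  assumes "prime p" "\<not> int p dvd D" "int p dvd M" "x - y = of_int M / of_int D"
  shows "rat_cong x y (int p)"
proof -
  obtain a b where q: "quotient_of (x - y) = (a, b)"
    by (cases "quotient_of (x - y)") auto
  have "D \<noteq> 0" using assms(2) by auto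
  moreover have "b > 0" using quotient_of_denom_pos[OF q] .
  moreover have "(of_int M / of_int D :: rat) = of_int a / of_int b"
    using quotient_of_div[OF q] assms(4) by simp
  ultimately have "M * b = a * D"
    by (simp add: field_simps flip: of_int_mult of_int_eq_iff)
  then have "int p dvd a * D"
    using assms(3) by (metis dvd_mult2)
  then have "int p dvd a"
    using assms(1,2) prime_dvd_multD[of "int p"] by auto
  then show ?thesis
    unfolding rat_cong_def q by simp
qed

theorem corollary2p6:
  fixes p :: nat
  assumes "prime p" and "odd p" and "p \<noteq> 5"
  defines "S \<equiv> (-1) ^ (p div 4) *
             (\<Sum>k = 0..p div 4. of_nat ((4*k) choose (2*k)) / (80::rat) ^ k)"
  shows "(p mod 5 = 1 \<longrightarrow> rat_cong S 1 (int p)) \<and>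
         (p mod 5 = 4 \<longrightarrow> rat_cong S (-1) (int p)) \<and>
         (p mod 5 = 2 \<longrightarrow> rat_cong S (1/2) (int p)) \<and>
         (p mod 5 = 3 \<longrightarrow> rat_cong S (-1/2) (int p))"
proof -
  define N where "N = p div 4"
  define T where "T = (\<Sum>k\<le>N. int (4 * k choose (2 * k)) * 80 ^ (N - k))"
  define c where "c = twice_residue p"
  have "(2 :: int) * 80 ^ N = 2 ^ (4 * N + 1) * 5 ^ N"
    by (simp add: power_add power_mult flip: power_mult_distrib)
  then have denominator: "\<not> int p dvd 2 * 80 ^ N"
    using int_prime_not_dvd_2_5_powers[OF assms(1-3)] by metis
  have numerator: "int p dvd 2 * (-1) ^ N * T - c * 80 ^ N"
    using central_binomial_sum_congruence[OF assms(1-3)] unfolding N_def T_def c_def .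
  have "S - of_int c / 2 = of_int (2 * (-1) ^ N * T - c * 80 ^ N) / of_int (2 * 80 ^ N)"
    using sum_div_power_eq[of 80 "\<lambda>k. 4 * k choose (2 * k)" N]
    unfolding S_def N_def[symmetric] T_def by (simp add: field_simps)
  then have "rat_cong S (of_int c / 2) (int p)"
    by (rule rat_cong_fraction[OF assms(1) denominator numerator])
  then show ?thesis
    unfolding c_def twice_residue_def by auto
qed

end
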